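(* Let $a<b$, let $I_n: a=x_0<x_1<\cdots<x_{n-1}<x_n=b$ be a partition of $[a,b]$, and let $h_i=x_{i+1}-x_i$ for $i=0,\dots,n-1$. Let $f:[a,b]\rightarrow\mathbb{R}$ be a differentiable mapping in $(a,b)$ such that $f'\in L^1[a,b]$ and $\gamma\le f'(x)\le \Gamma$ for all $x\in [a,b]$, where $\gamma,\Gamma$ are real constants. Define \[ S(f,I_n)=\frac{1}{2}\sum_{i=0}^{n-1}\left[f\left(\frac{3x_i+x_{i+1}}{4}\right)+f\left(\frac{x_i+3x_{i+1}}{4}\right)\right]h_i \] and $R(f,I_n)=\int_a^b f(x)\,dx-S(f,I_n)$, and let $S_i=\frac{f(x_{i+1})-f(x_i)}{h_i}$ for $i=0,\dots,n-1$. Then \[ |R(f,I_n)|\leq\frac{1}{4}\sum_{i=0}^{n-1}(S_i-\gamma)h_i^2 \qquad\text{and}\qquad |R(f,I_n)|\leq\frac{1}{4}\sum_{i=0}^{n-1}(\Gamma-S_i)h_i^2. \] *)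

theory Defs
  imports "HOL-Analysis.Analysis"
begin

definition quad_sum :: "(real \<Rightarrow> real) \<Rightarrow> (nat \<Rightarrow> real) \<Rightarrow> nat \<Rightarrow> real" where
  "quad_sum f x n = (1/2) * (\<Sum>i<n. (f ((3 * x i + x (Suc i)) / 4) + f ((x i + 3 * x (Suc i)) / 4))
                                     * (x (Suc i) - x i))"

definition quad_rem :: "(real \<Rightarrow> real) \<Rightarrow> real \<Rightarrow> real \<Rightarrow> (nat \<Rightarrow> real) \<Rightarrow> nat \<Rightarrow> real" where
  "quad_rem f a b x n = integral {a..b} f - quad_sum f x n"

definition slope :: "(real \<Rightarrow> real) \<Rightarrow> (nat \<Rightarrow> real) \<Rightarrow> nat \<Rightarrow> real" where
  "slope f x i = (f (x (Suc i)) - f (x i)) / (x (Suc i) - x i)"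

end

theory Submission
  imports Defs
begin

text \<open>
  If \<open>\<gamma> \<le> f'\<close>, then \<open>f t - \<gamma> t\<close> is nondecreasing, and the two-point rule, being exact for
  linear functions, has the same error for \<open>f\<close> as for \<open>f t - \<gamma> t\<close>. For a nondecreasing \<open>g\<close>
  on \<open>[c, d]\<close>, comparing the integral over each quarter of the interval with the values of
  \<open>g\<close> at its end points bounds the error by \<open>(d - c)(g d - g c)/4\<close>, which for
  \<open>g t = f t - \<gamma> t\<close> is \<open>(S - \<gamma>)(d - c)\<^sup>2/4\<close> with \<open>S\<close> the slope of the chord. The bound
  with \<open>\<Gamma>\<close> follows by applying this to \<open>-f\<close>, and the theorem by summing over the
  subintervals of the partition.
\<close>

definition two_point_error :: "(real \<Rightarrow> real) \<Rightarrow> real \<Rightarrow> real \<Rightarrow> real" where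
  "two_point_error f c d =
     integral {c..d} f - (d - c) / 2 * (f ((3 * c + d) / 4) + f ((c + 3 * d) / 4))"

lemma integral_bounds_mono_on:
  fixes g :: "real \<Rightarrow> real"
  assumes "u \<le> v" and "mono_on {u..v} g"
  shows "(v - u) * g u \<le> integral {u..v} g" and "integral {u..v} g \<le> (v - u) * g v"
proof -
  have g: "g integrable_on {u..v}"
    using assms(2) by (rule integrable_on_mono_on)
  have "integral {u..v} (\<lambda>_. g u) \<le> integral {u..v} g"
    by (rule integral_le) (use g assms in \<open>auto simp: mono_on_def\<close>)
  then show "(v - u) * g u \<le> integral {u..v} g"
    using assms(1) by simp
  have "integral {u..v} g \<le> integral {u..v} (\<lambda>_. g v)"
    by (rule integral_le) (use g assms in \<open>auto simp: mono_on_def\<close>)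
  then show "integral {u..v} g \<le> (v - u) * g v"
    using assms(1) by simp
qed

lemma two_point_error_mono_on:
  fixes g :: "real \<Rightarrow> real"
  assumes "c \<le> d" and g_mono: "mono_on {c..d} g"
  shows "\<bar>two_point_error g c d\<bar> \<le> (d - c) / 4 * (g d - g c)"
proof -
  define h where "h = (d - c) / 4"
  define p1 where "p1 = (3 * c + d) / 4"
  define m where "m = (c + d) / 2"
  define p3 where "p3 = (c + 3 * d) / 4"
  have h: "h \<ge> 0" "p1 - c = h" "m - p1 = h" "p3 - m = h" "d - p3 = h"
    using assms(1) by (auto simp: h_def p1_def m_def p3_def field_simps)
  then have ord: "c \<le> p1" "p1 \<le> m" "m \<le> p3" "p3 \<le> d"
    by auto
  have g: "g integrable_on {c..d}"
    using g_mono by (rule integrable_on_mono_on)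
  have "g integrable_on {p1..d}" "g integrable_on {m..d}"
    using g ord by (auto intro: integrable_subinterval_real)
  then have split: "integral {c..d} g =
      integral {c..p1} g + integral {p1..m} g + integral {m..p3} g + integral {p3..d} g"
    using Henstock_Kurzweil_Integration.integral_combine[OF ord(1) _ g]
      Henstock_Kurzweil_Integration.integral_combine[of p1 m d g]
      Henstock_Kurzweil_Integration.integral_combine[of m p3 d g]
      ord by linarith
  have quarter: "h * g u \<le> integral {u..v} g \<and> integral {u..v} g \<le> h * g v"
    if "c \<le> u" "v - u = h" "v \<le> d" for u v
    using integral_bounds_mono_on[of u v g] mono_on_subset[OF g_mono, of "{u..v}"] that h(1)
    by auto
  have "h * g c \<le> h * g p1" "h * g p1 \<le> h * g m" "h * g m \<le> h * g p3" "h * g p3 \<le> h * g d"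
    using ord h(1) g_mono by (auto intro!: mult_left_mono simp: mono_on_def)
  moreover have "(d - c) / 2 * (g p1 + g p3) = 2 * (h * g p1) + 2 * (h * g p3)"
      "(d - c) / 4 * (g d - g c) = h * g d - h * g c"
    by (simp_all add: h_def field_simps)
  moreover have "h * g c \<le> integral {c..p1} g \<and> integral {c..p1} g \<le> h * g p1"
      "h * g p1 \<le> integral {p1..m} g \<and> integral {p1..m} g \<le> h * g m"
      "h * g m \<le> integral {m..p3} g \<and> integral {m..p3} g \<le> h * g p3"
      "h * g p3 \<le> integral {p3..d} g \<and> integral {p3..d} g \<le> h * g d"
    using quarter h ord by auto
  ultimately show ?thesis
    unfolding two_point_error_def p1_def[symmetric] p3_def[symmetric] split by linarith
qed

text \<open>The nodes are symmetric about the midpoint, so the rule integrates linear functions exactly.\<close>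

lemma two_point_error_minus_linear:
  assumes "c \<le> d" and "f integrable_on {c..d}"
  shows "two_point_error (\<lambda>t. f t - k * t) c d = two_point_error f c d"
proof -
  have "((\<lambda>t. k * t) has_integral k * ((d\<^sup>2 - c\<^sup>2) / 2)) {c..d}"
    using has_integral_mult_right[OF ident_has_integral[of c d]] assms(1) by simp
  then have "integral {c..d} (\<lambda>t. f t - k * t) = integral {c..d} f - k * ((d\<^sup>2 - c\<^sup>2) / 2)"
    using assms(2) by (intro integral_unique has_integral_diff) auto
  then show ?thesis
    unfolding two_point_error_def by (simp add: power2_eq_square field_simps)
qed

lemma two_point_error_uminus:
  "two_point_error (\<lambda>t. - f t) c d = - two_point_error f c d"
  unfolding two_point_error_def integral_neg by (simp add: algebra_simps)

lemma two_point_error_le_slope_minus: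
  assumes "c < d" and g_mono: "mono_on {c..d} (\<lambda>t. f t - k * t)"
  shows "\<bar>two_point_error f c d\<bar> \<le> 1/4 * (((f d - f c) / (d - c) - k) * (d - c)\<^sup>2)"
proof -
  have "(\<lambda>t. (f t - k * t) + k * t) integrable_on {c..d}"
    by (intro integrable_add integrable_on_mono_on[OF g_mono] integrable_continuous_interval
        continuous_intros)
  then have "two_point_error f c d = two_point_error (\<lambda>t. f t - k * t) c d"
    using assms(1) by (simp add: two_point_error_minus_linear)
  also have "\<bar>\<dots>\<bar> \<le> (d - c) / 4 * ((f d - k * d) - (f c - k * c))"
    using assms by (intro two_point_error_mono_on) auto
  also have "\<dots> = 1/4 * (((f d - f c) / (d - c) - k) * (d - c)\<^sup>2)"
    using assms(1) by (simp add: power2_eq_square field_simps)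
  finally show ?thesis .
qed

lemma two_point_error_le_minus_slope:
  assumes "c < d" and "mono_on {c..d} (\<lambda>t. k * t - f t)"
  shows "\<bar>two_point_error f c d\<bar> \<le> 1/4 * ((k - (f d - f c) / (d - c)) * (d - c)\<^sup>2)"
proof -
  have "\<bar>two_point_error (\<lambda>t. - f t) c d\<bar>
      \<le> 1/4 * (((- f d - - f c) / (d - c) - - k) * (d - c)\<^sup>2)"
    using assms by (intro two_point_error_le_slope_minus) simp_all
  then show ?thesis
    by (simp add: two_point_error_uminus diff_divide_distrib algebra_simps)
qed

lemma mono_on_minus_linear_if_deriv_ge:
  assumes "continuous_on {c..d} f"
    and "\<And>t. t \<in> {c<..<d} \<Longrightarrow> (f has_real_derivative f' t) (at t)"
    and "\<And>t. t \<in> {c<..<d} \<Longrightarrow> k \<le> f' t"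
  shows "mono_on {c..d} (\<lambda>t. f t - k * t)"
proof (rule mono_onI)
  fix s t assume st: "s \<in> {c..d}" "t \<in> {c..d}" "s \<le> t"
  show "f s - k * s \<le> f t - k * t"
  proof (rule DERIV_nonneg_imp_increasing_open[OF \<open>s \<le> t\<close>])
    fix y assume "s < y" "y < t"
    then have "y \<in> {c<..<d}"
      using st by auto
    then have "((\<lambda>t. f t - k * t) has_real_derivative f' y - k) (at y)"
      using assms(2) by (auto intro!: derivative_eq_intros)
    moreover have "f' y - k \<ge> 0"
      using assms(3) \<open>y \<in> {c<..<d}\<close> by auto
    ultimately show "\<exists>z. ((\<lambda>t. f t - k * t) has_real_derivative z) (at y) \<and> z \<ge> 0"
      by blast
  next
    show "continuous_on {s..t} (\<lambda>t. f t - k * t)"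
      using st by (intro continuous_intros continuous_on_subset[OF assms(1)]) auto
  qed
qed

lemma mono_on_linear_minus_if_deriv_le:
  assumes "continuous_on {c..d} f"
    and "\<And>t. t \<in> {c<..<d} \<Longrightarrow> (f has_real_derivative f' t) (at t)"
    and "\<And>t. t \<in> {c<..<d} \<Longrightarrow> f' t \<le> k"
  shows "mono_on {c..d} (\<lambda>t. k * t - f t)"
proof -
  have "mono_on {c..d} (\<lambda>t. - f t - (- k) * t)"
    using assms by (intro mono_on_minus_linear_if_deriv_ge[where f' = "\<lambda>t. - f' t"])
      (auto intro: continuous_intros derivative_intros)
  then show ?thesis
    by simp
qed

lemma two_point_error_deriv_bounds:
  assumes "c < d" and "continuous_on {c..d} f"
    and "\<And>t. t \<in> {c<..<d} \<Longrightarrow> (f has_real_derivative f' t) (at t)"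
    and "\<And>t. t \<in> {c<..<d} \<Longrightarrow> \<gamma> \<le> f' t \<and> f' t \<le> \<Gamma>"
  shows "\<bar>two_point_error f c d\<bar> \<le> 1/4 * (((f d - f c) / (d - c) - \<gamma>) * (d - c)\<^sup>2)"
    and "\<bar>two_point_error f c d\<bar> \<le> 1/4 * ((\<Gamma> - (f d - f c) / (d - c)) * (d - c)\<^sup>2)"
proof -
  have "mono_on {c..d} (\<lambda>t. f t - \<gamma> * t)"
    by (rule mono_on_minus_linear_if_deriv_ge[OF assms(2,3)]) (use assms(4) in auto)
  then show "\<bar>two_point_error f c d\<bar> \<le> 1/4 * (((f d - f c) / (d - c) - \<gamma>) * (d - c)\<^sup>2)"
    by (rule two_point_error_le_slope_minus[OF assms(1)])
  have "mono_on {c..d} (\<lambda>t. \<Gamma> * t - f t)"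
    by (rule mono_on_linear_minus_if_deriv_le[OF assms(2,3)]) (use assms(4) in auto)
  then show "\<bar>two_point_error f c d\<bar> \<le> 1/4 * ((\<Gamma> - (f d - f c) / (d - c)) * (d - c)\<^sup>2)"
    by (rule two_point_error_le_minus_slope[OF assms(1)])
qed

lemma partition_le:
  fixes x :: "nat \<Rightarrow> 'a::order"
  assumes "\<And>i. i < n \<Longrightarrow> x i \<le> x (Suc i)" and "i \<le> j" and "j \<le> n"
  shows "x i \<le> x j"
proof (rule lift_Suc_mono_le_ivl[where N = "{..<n}"])
  show "{i..<j} \<subseteq> {..<n}"
    using assms(3) by auto
qed (use assms in auto)

lemma integral_partition:
  fixes f :: "real \<Rightarrow> 'a::banach"
  assumes "\<And>i. i < n \<Longrightarrow> x i \<le> x (Suc i)" and "f integrable_on {x 0..x n}"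
  shows "integral {x 0..x n} f = (\<Sum>i<n. integral {x i..x (Suc i)} f)"
  using assms
proof (induction n)
  case 0
  then show ?case by simp
next
  case (Suc n)
  have "x 0 \<le> x n" "x n \<le> x (Suc n)"
    using partition_le[where x = x and n = "Suc n" and i = 0 and j = n] Suc.prems(1) by auto
  then have "integral {x 0..x (Suc n)} f = integral {x 0..x n} f + integral {x n..x (Suc n)} f"
    and "f integrable_on {x 0..x n}"
    using Suc.prems(2)
    by (simp_all add: Henstock_Kurzweil_Integration.integral_combine integrable_subinterval_real)
  then show ?case
    using Suc by simp
qed

lemma quad_rem_eq_sum_two_point_error:
  assumes "\<And>i. i < n \<Longrightarrow> x i \<le> x (Suc i)" and "f integrable_on {x 0..x n}"
  shows "quad_rem f (x 0) (x n) x n = (\<Sum>i<n. two_point_error f (x i) (x (Suc i)))"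
proof -
  have "quad_rem f (x 0) (x n) x n = (\<Sum>i<n. integral {x i..x (Suc i)} f) -
      (\<Sum>i<n. 1/2 * ((f ((3 * x i + x (Suc i)) / 4) + f ((x i + 3 * x (Suc i)) / 4))
                     * (x (Suc i) - x i)))"
    using integral_partition[OF assms] by (simp add: quad_rem_def quad_sum_def sum_distrib_left)
  also have "\<dots> = (\<Sum>i<n. two_point_error f (x i) (x (Suc i)))"
    unfolding two_point_error_def sum_subtractf[symmetric] by (simp add: mult_ac)
  finally show ?thesis .
qed

theorem theorem3p1:
  fixes f f' :: "real \<Rightarrow> real" and a b \<gamma> \<Gamma> :: real and x :: "nat \<Rightarrow> real" and n :: nat
  assumes "a < b" and "n \<ge> 1"
    and "x 0 = a" and "x n = b" and "\<And>i. i < n \<Longrightarrow> x i < x (Suc i)"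
    and "continuous_on {a..b} f"
    and "\<And>t. t \<in> {a<..<b} \<Longrightarrow> (f has_real_derivative f' t) (at t)"
    and "f' absolutely_integrable_on {a..b}"
    and "\<And>t. t \<in> {a..b} \<Longrightarrow> \<gamma> \<le> f' t \<and> f' t \<le> \<Gamma>"
  shows "\<bar>quad_rem f a b x n\<bar> \<le> (1/4) * (\<Sum>i<n. (slope f x i - \<gamma>) * (x (Suc i) - x i)^2) \<and>
         \<bar>quad_rem f a b x n\<bar> \<le> (1/4) * (\<Sum>i<n. (\<Gamma> - slope f x i) * (x (Suc i) - x i)^2)"
proof -
  let ?E = "\<lambda>i. two_point_error f (x i) (x (Suc i))"
  have x_le: "\<And>i. i < n \<Longrightarrow> x i \<le> x (Suc i)"
    using assms(5) less_imp_le by blast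
  have sub: "a \<le> x i" "x (Suc i) \<le> b" if "i < n" for i
    using partition_le[where x = x and n = n and i = 0 and j = i]
      partition_le[where x = x and n = n and i = "Suc i" and j = n]
      x_le that assms(3,4) by auto
  have "quad_rem f a b x n = (\<Sum>i<n. ?E i)"
    using quad_rem_eq_sum_two_point_error[where x = x and n = n, OF x_le]
      integrable_continuous_interval[OF assms(6)] assms(3,4) by simp
  then have abs_le: "\<bar>quad_rem f a b x n\<bar> \<le> (\<Sum>i<n. \<bar>?E i\<bar>)"
    by (simp add: sum_abs)
  have E_bounds: "\<bar>?E i\<bar> \<le> 1/4 * ((slope f x i - \<gamma>) * (x (Suc i) - x i)^2)"
      "\<bar>?E i\<bar> \<le> 1/4 * ((\<Gamma> - slope f x i) * (x (Suc i) - x i)^2)" if "i < n" for i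
  proof -
    have "x i < x (Suc i)" "continuous_on {x i..x (Suc i)} f"
      "\<And>t. t \<in> {x i<..<x (Suc i)} \<Longrightarrow> (f has_real_derivative f' t) (at t)"
      "\<And>t. t \<in> {x i<..<x (Suc i)} \<Longrightarrow> \<gamma> \<le> f' t \<and> f' t \<le> \<Gamma>"
      using sub[OF that] assms(5)[OF that] assms(7,9)
      by (auto intro: continuous_on_subset[OF assms(6)])
    then show "\<bar>?E i\<bar> \<le> 1/4 * ((slope f x i - \<gamma>) * (x (Suc i) - x i)^2)"
      "\<bar>?E i\<bar> \<le> 1/4 * ((\<Gamma> - slope f x i) * (x (Suc i) - x i)^2)"
      unfolding slope_def by (fact two_point_error_deriv_bounds)+
  qed
  have "(\<Sum>i<n. \<bar>?E i\<bar>) \<le> (\<Sum>i<n. 1/4 * ((slope f x i - \<gamma>) * (x (Suc i) - x i)^2))"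
    and "(\<Sum>i<n. \<bar>?E i\<bar>) \<le> (\<Sum>i<n. 1/4 * ((\<Gamma> - slope f x i) * (x (Suc i) - x i)^2))"
    by (intro sum_mono E_bounds; simp)+
  with abs_le show ?thesis
    unfolding sum_distrib_left by linarith
qed

end
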